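(* Let $\mathcal X$ be a compact set in a normed space (dual norm $\|\cdot\|_*$), let $w_n>0$, and let each $l_n$ be differentiable and $\mu_n$-strongly convex for some $\mu_n\ge0$, with $\sum_{m=1}^nw_m\mu_m>0$ for all $n$. In round $n$ let $v_{n+1}$ be a differentiable (possibly nonconvex) function such that $\sum_{m=1}^nw_ml_m+w_{n+1}v_{n+1}$ is convex, and suppose the learner plays $x_{n+1}\in\operatorname{arg\,min}_{x\in\mathcal X}\big(\sum_{m=1}^nw_ml_m+w_{n+1}v_{n+1}\big)(x)$ (with $x_1\in\operatorname{arg\,min}_{\mathcal X}v_1$, $v_1$ convex). Then $$\mathrm{regret}^w(\mathcal X):=\sum_{n=1}^Nw_nl_n(x_n)-\min_{x\in\mathcal X}\sum_{n=1}^Nw_nl_n(x)\le\sum_{n=1}^N\frac{w_n^2\|\nabla l_n(x_n)-\nabla v_n(x_n)\|_*^2}{2\sum_{m=1}^nw_m\mu_m}.$$ In particular, if $\mu_n=\mu>0$ and $w_n=n^p$ with $p\ge0$, then $\mathrm{regret}^w(\mathcal X)\le\frac{p+1}{2\mu}\sum_{n=1}^Nn^{p-1}\|\nabla l_n(x_n)-\nabla v_n(x_n)\|_*^2$.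
   Formalization: The set $\mathcal X$ is convex as well as compact. The paper assumes this as well. *)

theory Defs
  imports "HOL-Analysis.Analysis"
begin

definition strongly_convex_on :: "'a::real_normed_vector set \<Rightarrow> real \<Rightarrow> ('a \<Rightarrow> real) \<Rightarrow> bool" where
  "strongly_convex_on S mu f \<longleftrightarrow>
     (\<forall>x\<in>S. \<forall>y\<in>S. \<forall>t::real. 0 \<le> t \<and> t \<le> 1 \<longrightarrow>
        f ((1 - t) *\<^sub>R x + t *\<^sub>R y)
          \<le> (1 - t) * f x + t * f y - mu / 2 * t * (1 - t) * (norm (x - y))\<^sup>2)"

text \<open>Dual norm of a (bounded linear) functional, i.e. of a gradient given as its
  Frechet derivative: the operator norm.\<close>
definition dual_norm :: "('a::real_normed_vector \<Rightarrow> real) \<Rightarrow> real" where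
  "dual_norm g = onorm g"

end

theory Submission
  imports Defs
begin

text \<open>The cumulative loss \<open>S\<^sub>n = \<Sum>\<^sub>m\<^sub>\<le>\<^sub>n w\<^sub>m l\<^sub>m\<close> is \<open>\<sigma>\<^sub>n\<close>-strongly convex with
  \<open>\<sigma>\<^sub>n = \<Sum>\<^sub>m\<^sub>\<le>\<^sub>n w\<^sub>m \<mu>\<^sub>m\<close>, and \<open>x\<^sub>n\<close> minimises \<open>S\<^sub>n - H\<^sub>n\<close> over \<open>X\<close>, where
  \<open>H\<^sub>n = w\<^sub>n (l\<^sub>n - v\<^sub>n)\<close> is the error of the optimistic guess \<open>v\<^sub>n\<close>. Comparing the first-order
  optimality condition of this perturbed minimiser with strong convexity gives
  \<open>S\<^sub>n(x\<^sub>n) - S\<^sub>n(y) \<le> \<parallel>H\<^sub>n'(x\<^sub>n)\<parallel>\<^sub>*\<^sup>2 / (2 \<sigma>\<^sub>n)\<close>, and these round-wise gaps telescope to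
  the regret ("be the leader"). For \<open>w\<^sub>n = n\<^sup>p\<close> one bounds \<open>n\<^sup>p\<^sup>+\<^sup>1 \<le> (p + 1) \<Sum>\<^sub>m\<^sub>\<le>\<^sub>n m\<^sup>p\<close>
  by the mean value theorem.\<close>

lemma has_derivative_directional_at_right:
  fixes H :: "'a::real_normed_vector \<Rightarrow> real"
  assumes "(H has_derivative H') (at x)"
  shows "((\<lambda>t. (H (x + t *\<^sub>R d) - H x) / t) \<longlongrightarrow> H' d) (at_right 0)"
proof -
  have "((\<lambda>t::real. x + t *\<^sub>R d) has_derivative (\<lambda>s. s *\<^sub>R d)) (at 0)"
    by (auto intro!: derivative_eq_intros)
  then have "((\<lambda>t. H (x + t *\<^sub>R d)) has_derivative (\<lambda>s. H' (s *\<^sub>R d))) (at 0)"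
    using has_derivative_compose assms by fastforce
  moreover have "(\<lambda>s. H' (s *\<^sub>R d)) = (*) (H' d)"
    using linear_scale[OF bounded_linear.linear[OF has_derivative_bounded_linear[OF assms]]]
    by (auto simp: fun_eq_iff)
  ultimately have "((\<lambda>t. H (x + t *\<^sub>R d)) has_field_derivative H' d) (at 0 within {0<..})"
    unfolding has_field_derivative_def by (simp add: has_derivative_at_withinI)
  then show ?thesis
    by (simp add: has_field_derivative_iff)
qed

lemma strongly_convex_on_sum:
  assumes "finite I"
    and "\<And>i. i \<in> I \<Longrightarrow> w i \<ge> 0"
    and "\<And>i. i \<in> I \<Longrightarrow> strongly_convex_on S (\<mu> i) (f i)"
  shows "strongly_convex_on S (\<Sum>i\<in>I. w i * \<mu> i) (\<lambda>z. \<Sum>i\<in>I. w i * f i z)"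
  unfolding strongly_convex_on_def
proof (intro ballI allI impI)
  fix x y and t :: real
  assume "x \<in> S" "y \<in> S" "0 \<le> t \<and> t \<le> 1"
  define K where "K = t * (1 - t) * (norm (x - y))\<^sup>2 / 2"
  have "(\<Sum>i\<in>I. w i * f i ((1 - t) *\<^sub>R x + t *\<^sub>R y))
      \<le> (\<Sum>i\<in>I. (1 - t) * (w i * f i x) + t * (w i * f i y) - (w i * \<mu> i) * K)"
  proof (rule sum_mono)
    fix i assume i: "i \<in> I"
    have "f i ((1 - t) *\<^sub>R x + t *\<^sub>R y) \<le> (1 - t) * f i x + t * f i y - \<mu> i * K"
      using assms(3)[OF i] \<open>x \<in> S\<close> \<open>y \<in> S\<close> \<open>0 \<le> t \<and> t \<le> 1\<close>
      unfolding strongly_convex_on_def K_def by (auto simp: algebra_simps)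
    then show "w i * f i ((1 - t) *\<^sub>R x + t *\<^sub>R y)
        \<le> (1 - t) * (w i * f i x) + t * (w i * f i y) - (w i * \<mu> i) * K"
      using mult_left_mono[OF _ assms(2)[OF i]] by (fastforce simp: algebra_simps)
  qed
  also have "\<dots> = (1 - t) * (\<Sum>i\<in>I. w i * f i x) + t * (\<Sum>i\<in>I. w i * f i y)
      - (\<Sum>i\<in>I. w i * \<mu> i) * K"
    by (simp add: sum.distrib sum_subtractf sum_distrib_left sum_distrib_right)
  also have "\<dots> = (1 - t) * (\<Sum>i\<in>I. w i * f i x) + t * (\<Sum>i\<in>I. w i * f i y)
      - (\<Sum>i\<in>I. w i * \<mu> i) / 2 * t * (1 - t) * (norm (x - y))\<^sup>2"
    by (simp add: K_def)
  finally show "(\<Sum>i\<in>I. w i * f i ((1 - t) *\<^sub>R x + t *\<^sub>R y))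
      \<le> (1 - t) * (\<Sum>i\<in>I. w i * f i x) + t * (\<Sum>i\<in>I. w i * f i y)
        - (\<Sum>i\<in>I. w i * \<mu> i) / 2 * t * (1 - t) * (norm (x - y))\<^sup>2" .
qed

lemma perturbed_minimizer_first_order:
  fixes f H :: "'a::real_normed_vector \<Rightarrow> real"
  assumes S: "convex S" and f: "strongly_convex_on S \<sigma> f"
    and x: "x \<in> S" and y: "y \<in> S"
    and H: "(H has_derivative H') (at x)"
    and min: "\<And>z. z \<in> S \<Longrightarrow> f x - H x \<le> f z - H z"
  shows "H' (y - x) \<le> f y - f x - \<sigma> / 2 * (norm (y - x))\<^sup>2"
proof -
  define d where "d = y - x"
  have "\<forall>\<^sub>F t in at_right 0. (H (x + t *\<^sub>R d) - H x) / t
      \<le> f y - f x - \<sigma> / 2 * (1 - t) * (norm d)\<^sup>2"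
    unfolding eventually_at_right_field
  proof (intro exI[of _ 1] conjI allI impI)
    fix t :: real assume t: "0 < t" "t < 1"
    have z: "x + t *\<^sub>R d = (1 - t) *\<^sub>R x + t *\<^sub>R y"
      unfolding d_def by (simp add: algebra_simps)
    have "x + t *\<^sub>R d \<in> S"
      unfolding z using S x y t by (simp add: convex_def)
    then have "H (x + t *\<^sub>R d) - H x \<le> f (x + t *\<^sub>R d) - f x"
      using min by force
    also have "\<dots> \<le> t * (f y - f x - \<sigma> / 2 * (1 - t) * (norm d)\<^sup>2)"
    proof -
      have "f ((1 - t) *\<^sub>R x + t *\<^sub>R y)
          \<le> (1 - t) * f x + t * f y - \<sigma> / 2 * t * (1 - t) * (norm (x - y))\<^sup>2"
        using f x y t unfolding strongly_convex_on_def by simp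
      then show ?thesis
        unfolding z d_def by (simp add: norm_minus_commute algebra_simps)
    qed
    finally show "(H (x + t *\<^sub>R d) - H x) / t \<le> f y - f x - \<sigma> / 2 * (1 - t) * (norm d)\<^sup>2"
      using t by (simp add: divide_le_eq mult.commute)
  qed simp
  moreover have "((\<lambda>t. f y - f x - \<sigma> / 2 * (1 - t) * (norm d)\<^sup>2)
      \<longlongrightarrow> f y - f x - \<sigma> / 2 * (1 - 0) * (norm d)\<^sup>2) (at_right 0)"
    by (intro tendsto_intros)
  ultimately show ?thesis
    using tendsto_le[OF _ _ has_derivative_directional_at_right[OF H]] d_def by fastforce
qed

lemma perturbed_minimizer_gap:
  fixes f H :: "'a::real_normed_vector \<Rightarrow> real"
  assumes "convex S" and "strongly_convex_on S \<sigma> f" and "\<sigma> > 0"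
    and "x \<in> S" and "y \<in> S"
    and H: "(H has_derivative H') (at x)"
    and "\<And>z. z \<in> S \<Longrightarrow> f x - H x \<le> f z - H z"
  shows "f x - f y \<le> (onorm H')\<^sup>2 / (2 * \<sigma>)"
proof -
  define a r where "a = onorm H'" and "r = norm (y - x)"
  have "- (a * r) \<le> H' (y - x)"
    using onorm[OF has_derivative_bounded_linear[OF H], of "y - x"]
    unfolding a_def r_def by (simp add: abs_le_iff)
  also have "\<dots> \<le> f y - f x - \<sigma> / 2 * r\<^sup>2"
    unfolding r_def by (rule perturbed_minimizer_first_order[OF assms(1,2,4,5) H assms(7)])
  finally have "f x - f y \<le> a * r - \<sigma> / 2 * r\<^sup>2" by linarith
  moreover have "0 \<le> (\<sigma> * r - a)\<^sup>2 / (2 * \<sigma>)"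
    using \<open>\<sigma> > 0\<close> by simp
  moreover have "(\<sigma> * r - a)\<^sup>2 / (2 * \<sigma>) = \<sigma> / 2 * r\<^sup>2 - a * r + a\<^sup>2 / (2 * \<sigma>)"
    using \<open>\<sigma> > 0\<close> by (simp add: field_simps power2_eq_square)
  ultimately show ?thesis
    unfolding a_def by linarith
qed

lemma weighted_round_gap:
  fixes l :: "nat \<Rightarrow> 'a::real_normed_vector \<Rightarrow> real"
  assumes X: "convex X" and x: "x \<in> X" and y: "y \<in> X"
    and w: "\<And>m. m \<in> {1..n} \<Longrightarrow> w m \<ge> 0"
    and l: "\<And>m. m \<in> {1..n} \<Longrightarrow> strongly_convex_on X (\<mu> m) (l m)"
    and \<sigma>: "(\<Sum>m=1..n. w m * \<mu> m) > 0"
    and L: "(l n has_derivative L) (at x)" and V: "(v has_derivative V) (at x)"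
    and min: "\<And>z. z \<in> X \<Longrightarrow>
      (\<Sum>m=1..<n. w m * l m x) + w n * v x \<le> (\<Sum>m=1..<n. w m * l m z) + w n * v z"
  shows "(\<Sum>m=1..n. w m * l m x) - (\<Sum>m=1..n. w m * l m y)
    \<le> (w n)\<^sup>2 * (dual_norm (\<lambda>h. L h - V h))\<^sup>2 / (2 * (\<Sum>m=1..n. w m * \<mu> m))"
proof -
  have "n \<ge> 1"
    using \<sigma> by (cases n) auto
  then have sum_split: "(\<Sum>m=1..n. w m * l m z) = (\<Sum>m=1..<n. w m * l m z) + w n * l n z" for z
    by (simp flip: atLeastLessThanSuc_atLeastAtMost)
  have "(\<Sum>m=1..n. w m * l m x) - (\<Sum>m=1..n. w m * l m y)
      \<le> (onorm (\<lambda>h. w n * (L h - V h)))\<^sup>2 / (2 * (\<Sum>m=1..n. w m * \<mu> m))"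
  proof (rule perturbed_minimizer_gap[OF X _ \<sigma> x y])
    show "strongly_convex_on X (\<Sum>m=1..n. w m * \<mu> m) (\<lambda>z. \<Sum>m=1..n. w m * l m z)"
      using w l by (rule strongly_convex_on_sum[OF finite_atLeastAtMost])
    show "((\<lambda>z. w n * (l n z - v z)) has_derivative (\<lambda>h. w n * (L h - V h))) (at x)"
      using L V by (auto intro!: derivative_eq_intros)
    show "(\<Sum>m=1..n. w m * l m x) - w n * (l n x - v x)
        \<le> (\<Sum>m=1..n. w m * l m z) - w n * (l n z - v z)" if "z \<in> X" for z
      using min[OF that] unfolding sum_split by (simp add: algebra_simps)
  qed
  also have "onorm (\<lambda>h. w n * (L h - V h)) = w n * dual_norm (\<lambda>h. L h - V h)"
    using onorm_scaleR[of "\<lambda>h. L h - V h" "w n"] w[of n] \<open>n \<ge> 1\<close>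
      has_derivative_bounded_linear[OF L] has_derivative_bounded_linear[OF V]
    by (simp add: dual_norm_def bounded_linear_sub)
  finally show ?thesis
    by (simp add: power_mult_distrib)
qed

lemma regret_le_sum_round_gaps:
  fixes f :: "nat \<Rightarrow> 'a \<Rightarrow> real"
  assumes "X \<noteq> {}" and x: "\<And>n. n \<ge> 1 \<Longrightarrow> x n \<in> X"
    and gap: "\<And>n y. n \<ge> 1 \<Longrightarrow> y \<in> X \<Longrightarrow> (\<Sum>m=1..n. f m (x n)) - (\<Sum>m=1..n. f m y) \<le> b n"
  shows "(\<Sum>n=1..N. f n (x n)) - (INF y\<in>X. \<Sum>n=1..N. f n y) \<le> (\<Sum>n=1..N. b n)"
proof -
  have "(\<Sum>n=1..M. f n (x n)) - (\<Sum>n=1..M. f n y) \<le> (\<Sum>n=1..M. b n)" if "y \<in> X" for M y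
    using that
  proof (induction M arbitrary: y)
    case (Suc M)
    have "(\<Sum>n=1..M. f n (x n)) - (\<Sum>n=1..M. f n (x (Suc M))) \<le> (\<Sum>n=1..M. b n)"
      using Suc.IH x[of "Suc M"] by simp
    moreover have "(\<Sum>n=1..Suc M. f n (x (Suc M))) - (\<Sum>n=1..Suc M. f n y) \<le> b (Suc M)"
      using Suc.prems by (intro gap) simp_all
    ultimately show ?case
      by simp
  qed simp
  then have "(\<Sum>n=1..N. f n (x n)) - (\<Sum>n=1..N. b n) \<le> (INF y\<in>X. \<Sum>n=1..N. f n y)"
    using \<open>X \<noteq> {}\<close> by (intro cINF_greatest) (auto simp: algebra_simps)
  then show ?thesis
    by linarith
qed

lemma powr_add_one_le_sum_powr:
  fixes p :: real
  assumes p: "p \<ge> 0"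
  shows "real n powr (p + 1) \<le> (p + 1) * (\<Sum>m=1..n. real m powr p)"
proof (induction n)
  case (Suc n)
  have "real (Suc n) powr (p + 1) - real n powr (p + 1) \<le> (p + 1) * real (Suc n) powr p"
  proof (cases "n = 0")
    case False
    obtain z where z: "real n < z" "z < real (Suc n)"
      and mvt: "real (Suc n) powr (p + 1) - real n powr (p + 1) = (p + 1) * z powr p"
      using MVT2[of "real n" "real (Suc n)" "\<lambda>t. t powr (p + 1)" "\<lambda>t. (p + 1) * t powr p"]
        has_real_derivative_powr[of _ "p + 1"] False
      by (fastforce simp: of_nat_Suc)
    have "z powr p \<le> real (Suc n) powr p"
      using z False p by (intro powr_mono2) auto
    then show ?thesis
      unfolding mvt using p by (simp add: mult_left_mono)
  qed (use p in simp)
  then show ?case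
    using Suc by (simp add: algebra_simps)
qed simp

lemma sum_gaps_powr_weights_le:
  fixes p c :: real and w \<mu> D :: "nat \<Rightarrow> real"
  assumes p: "p \<ge> 0" and c: "c > 0" and D: "\<And>n. D n \<ge> 0"
    and w: "\<And>n. n \<ge> 1 \<Longrightarrow> w n = real n powr p" and \<mu>: "\<And>n. n \<ge> 1 \<Longrightarrow> \<mu> n = c"
  shows "(\<Sum>n=1..N. (w n)\<^sup>2 * D n / (2 * (\<Sum>m=1..n. w m * \<mu> m)))
    \<le> (p + 1) / (2 * c) * (\<Sum>n=1..N. real n powr (p - 1) * D n)"
  unfolding sum_distrib_left[of "(p + 1) / (2 * c)"]
proof (rule sum_mono)
  fix n assume "n \<in> {1..N}"
  then have n: "n \<ge> 1" by simp
  define T where "T = (\<Sum>m=1..n. real m powr p)"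
  have "0 < real n powr p" "real n powr p \<le> T"
    unfolding T_def using n by (auto intro: member_le_sum)
  then have "T > 0"
    by linarith
  have sum_eq: "(\<Sum>m=1..n. w m * \<mu> m) = T * c"
    unfolding T_def sum_distrib_right using w \<mu> by (intro sum.cong) auto
  have "(w n)\<^sup>2 = real n powr (p + 1) * real n powr (p - 1)"
    using n w by (simp add: power2_eq_square flip: powr_add)
  also have "\<dots> \<le> (p + 1) * T * real n powr (p - 1)"
    unfolding T_def using powr_add_one_le_sum_powr[OF p] by (intro mult_right_mono) auto
  finally have "(w n)\<^sup>2 * D n / (2 * (T * c))
      \<le> (p + 1) * T * real n powr (p - 1) * D n / (2 * (T * c))"
    using D c \<open>T > 0\<close> by (intro divide_right_mono mult_right_mono) auto
  also have "\<dots> = (p + 1) / (2 * c) * (real n powr (p - 1) * D n)"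
    using c \<open>T > 0\<close> by simp
  finally show "(w n)\<^sup>2 * D n / (2 * (\<Sum>m=1..n. w m * \<mu> m))
      \<le> (p + 1) / (2 * c) * (real n powr (p - 1) * D n)"
    by (simp only: sum_eq)
qed

theorem lemma17:
  fixes X :: "'a::real_normed_vector set"
    and l v :: "nat \<Rightarrow> 'a \<Rightarrow> real"
    and L V :: "nat \<Rightarrow> 'a \<Rightarrow> 'a \<Rightarrow> real"
    and w \<mu> :: "nat \<Rightarrow> real"
    and x :: "nat \<Rightarrow> 'a"
    and N :: nat
  assumes X_compact: "compact X"
    and X_convex: "convex X"
    and w_pos: "\<And>n. n \<ge> 1 \<Longrightarrow> w n > 0"
    and mu_nonneg: "\<And>n. n \<ge> 1 \<Longrightarrow> \<mu> n \<ge> 0"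
    and l_sc: "\<And>n. n \<ge> 1 \<Longrightarrow> strongly_convex_on X (\<mu> n) (l n)"
    and l_deriv: "\<And>n y. n \<ge> 1 \<Longrightarrow> y \<in> X \<Longrightarrow> (l n has_derivative L n y) (at y)"
    and v_deriv: "\<And>n y. n \<ge> 1 \<Longrightarrow> y \<in> X \<Longrightarrow> (v n has_derivative V n y) (at y)"
    and sum_mu_pos: "\<And>n. n \<ge> 1 \<Longrightarrow> (\<Sum>m=1..n. w m * \<mu> m) > 0"
    and v1_convex: "convex_on X (v 1)"
    and x1: "x 1 \<in> X" "\<And>y. y \<in> X \<Longrightarrow> v 1 (x 1) \<le> v 1 y"
    and F_convex: "\<And>n. n \<ge> 1 \<Longrightarrow>
        convex_on X (\<lambda>y. (\<Sum>m=1..n. w m * l m y) + w (Suc n) * v (Suc n) y)"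
    and x_next: "\<And>n. n \<ge> 1 \<Longrightarrow> x (Suc n) \<in> X"
    and x_next_min: "\<And>n y. n \<ge> 1 \<Longrightarrow> y \<in> X \<Longrightarrow>
        (\<Sum>m=1..n. w m * l m (x (Suc n))) + w (Suc n) * v (Suc n) (x (Suc n))
          \<le> (\<Sum>m=1..n. w m * l m y) + w (Suc n) * v (Suc n) y"
  shows "(\<Sum>n=1..N. w n * l n (x n)) - (INF y\<in>X. \<Sum>n=1..N. w n * l n y)
           \<le> (\<Sum>n=1..N. (w n)\<^sup>2 * (dual_norm (\<lambda>h. L n (x n) h - V n (x n) h))\<^sup>2
                            / (2 * (\<Sum>m=1..n. w m * \<mu> m)))
       \<and> (\<forall>\<mu>0 p::real. \<mu>0 > 0 \<and> p \<ge> 0 \<and> (\<forall>n\<ge>1. \<mu> n = \<mu>0 \<and> w n = real n powr p) \<longrightarrow>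
            (\<Sum>n=1..N. w n * l n (x n)) - (INF y\<in>X. \<Sum>n=1..N. w n * l n y)
              \<le> (p + 1) / (2 * \<mu>0) *
                 (\<Sum>n=1..N. real n powr (p - 1) * (dual_norm (\<lambda>h. L n (x n) h - V n (x n) h))\<^sup>2))"
proof -
  define g where "g n = (\<lambda>h. L n (x n) h - V n (x n) h)" for n
  define gaps where "gaps = (\<Sum>n=1..N. (w n)\<^sup>2 * (dual_norm (g n))\<^sup>2 / (2 * (\<Sum>m=1..n. w m * \<mu> m)))"
  have xX: "x n \<in> X" if "n \<ge> 1" for n
    using that x1(1) x_next[of "n - 1"] by (cases "n = 1") auto
  have x_min: "(\<Sum>m=1..<n. w m * l m (x n)) + w n * v n (x n)
      \<le> (\<Sum>m=1..<n. w m * l m z) + w n * v n z" if "n \<ge> 1" "z \<in> X" for n z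
  proof (cases "n = 1")
    case True
    then show ?thesis
      using x1(2)[OF \<open>z \<in> X\<close>] w_pos[of 1] by simp
  next
    case False
    then obtain k where "n = Suc k" "k \<ge> 1"
      using \<open>n \<ge> 1\<close> by (cases n) auto
    then show ?thesis
      using x_next_min[of k z] \<open>z \<in> X\<close> by (simp add: atLeastLessThanSuc_atLeastAtMost)
  qed
  have "(\<Sum>m=1..n. w m * l m (x n)) - (\<Sum>m=1..n. w m * l m y)
      \<le> (w n)\<^sup>2 * (dual_norm (g n))\<^sup>2 / (2 * (\<Sum>m=1..n. w m * \<mu> m))"
    if n: "n \<ge> 1" and "y \<in> X" for n y
    unfolding g_def
    using X_convex xX[OF n] \<open>y \<in> X\<close> _ _ sum_mu_pos[OF n]
      l_deriv[OF n xX[OF n]] v_deriv[OF n xX[OF n]] x_min[OF n]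
    by (rule weighted_round_gap) (auto simp: w_pos less_imp_le l_sc)
  then have "(\<Sum>n=1..N. w n * l n (x n)) - (INF y\<in>X. \<Sum>n=1..N. w n * l n y) \<le> gaps"
    unfolding gaps_def using x1(1) xX
    by (intro regret_le_sum_round_gaps[where f = "\<lambda>n y. w n * l n y"]) auto
  moreover have "gaps \<le> (p + 1) / (2 * \<mu>0) * (\<Sum>n=1..N. real n powr (p - 1) * (dual_norm (g n))\<^sup>2)"
    if "\<mu>0 > 0 \<and> p \<ge> 0 \<and> (\<forall>n\<ge>1. \<mu> n = \<mu>0 \<and> w n = real n powr p)" for \<mu>0 p
    unfolding gaps_def using that by (intro sum_gaps_powr_weights_le) auto
  ultimately show ?thesis
    unfolding gaps_def g_def by (meson order_trans)
qed

end
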